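(* Let $n\ge1$, let $V=\bigoplus_{i=1}^{2n-1}V_i$ and $W=\bigoplus_{i=1}^{2n-1}W_i$ be arbitrary graded finite-dimensional complex vector spaces, and let $(B_h,\Gamma_i,\Delta_i)\in\Lambda^{\mathrm A_{2n-1}}(V,W)$. Define $A,B\in\mathrm{End}(V)$, $\Gamma\in\mathrm{Hom}(W,V)$, $\Delta\in\mathrm{Hom}(V,W)$ by $A=\bigoplus_{i=1}^{2n-2}B_{i+1,i}$, $B=\bigoplus_{i=1}^{2n-2}\epsilon_iB_{i,i+1}$ with $\epsilon_i=+1$ for $i<n$ and $\epsilon_i=-1$ for $i\ge n$, $\Gamma=\bigoplus_i\Gamma_i$, $\Delta=\bigoplus_i\Delta_i$. Then the elements \[X(z)=\mathrm{id}_W-\sum_{j,k\ge0}\Delta A^jB^k\Gamma\,z^{j+k+2},\qquad Y(z)=\mathrm{id}_W+\sum_{j,k\ge0}\Delta B^kA^j\Gamma\,z^{j+k+2}\] of $\mathrm{End}(W)[z]$ are inverse to each other.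
   Context: $B_{i,j}$ ($|i-j|=1$) denotes a linear map $V_j\to V_i$, $\Gamma_i:W_i\to V_i$, $\Delta_i:V_i\to W_i$. $\Lambda^{\mathrm A_{2n-1}}(V,W)$ is the set of tuples $(B_{i,j},\Gamma_i,\Delta_i)$ satisfying, with the conventions that $B_{0,1},B_{1,0},B_{2n,2n-1},B_{2n-1,2n}$ are zero: $B_{i,i+1}B_{i+1,i}-B_{i,i-1}B_{i-1,i}=\Gamma_i\Delta_i$ for $1\le i\le n-1$; $-B_{n,n-1}B_{n-1,n}-B_{n,n+1}B_{n+1,n}=\Gamma_n\Delta_n$; and $B_{i,i-1}B_{i-1,i}-B_{i,i+1}B_{i+1,i}=\Gamma_i\Delta_i$ for $n+1\le i\le 2n-1$. (These are the preprojective relations for the type $\mathrm A_{2n-1}$ quiver oriented towards the middle vertex $n$.) *)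

theory Defs
  imports "Jordan_Normal_Form.Matrix"
begin

text \<open>Graded spaces: V_i = C^(dv i), W_i = C^(dw i) for i in {1..2n-1}.
  Linear maps are complex matrices. B i j : V_j -> V_i.\<close>

definition Bz :: "nat \<Rightarrow> (nat \<Rightarrow> nat) \<Rightarrow> (nat \<Rightarrow> nat \<Rightarrow> complex mat) \<Rightarrow> nat \<Rightarrow> nat \<Rightarrow> complex mat" where
  "Bz n dv B i j = (if 1 \<le> i \<and> i \<le> 2*n-1 \<and> 1 \<le> j \<and> j \<le> 2*n-1 then B i j else 0\<^sub>m (dv i) (dv j))"

definition Lambda_A :: "nat \<Rightarrow> (nat \<Rightarrow> nat) \<Rightarrow> (nat \<Rightarrow> nat) \<Rightarrow> (nat \<Rightarrow> nat \<Rightarrow> complex mat)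
    \<Rightarrow> (nat \<Rightarrow> complex mat) \<Rightarrow> (nat \<Rightarrow> complex mat) \<Rightarrow> bool" where
  "Lambda_A n dv dw B Gam Del \<longleftrightarrow>
     (\<forall>i j. 1 \<le> i \<and> i \<le> 2*n-1 \<and> 1 \<le> j \<and> j \<le> 2*n-1 \<and> (i = j + 1 \<or> j = i + 1)
        \<longrightarrow> B i j \<in> carrier_mat (dv i) (dv j)) \<and>
     (\<forall>i. 1 \<le> i \<and> i \<le> 2*n-1 \<longrightarrow> Gam i \<in> carrier_mat (dv i) (dw i) \<and> Del i \<in> carrier_mat (dw i) (dv i)) \<and>
     (\<forall>i. 1 \<le> i \<and> i \<le> n - 1 \<longrightarrow>
        Bz n dv B i (i+1) * Bz n dv B (i+1) i - Bz n dv B i (i-1) * Bz n dv B (i-1) i = Gam i * Del i) \<and>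
     (- (Bz n dv B n (n-1) * Bz n dv B (n-1) n) - Bz n dv B n (n+1) * Bz n dv B (n+1) n = Gam n * Del n) \<and>
     (\<forall>i. n + 1 \<le> i \<and> i \<le> 2*n - 1 \<longrightarrow>
        Bz n dv B i (i-1) * Bz n dv B (i-1) i - Bz n dv B i (i+1) * Bz n dv B (i+1) i = Gam i * Del i)"

text \<open>Offsets of the graded pieces inside the direct sum (indices start at 1).\<close>
definition offs :: "(nat \<Rightarrow> nat) \<Rightarrow> nat \<Rightarrow> nat" where
  "offs d i = sum d {1..<i}"

definition blk :: "(nat \<Rightarrow> nat) \<Rightarrow> nat \<Rightarrow> nat" where
  "blk d r = (LEAST i. r < sum d {1..i})"

text \<open>Block matrix on the direct sum over indices 1..m; E i j a b is the (a,b) entry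
  of the (i,j) block (map from piece j to piece i).\<close>
definition block_mat :: "nat \<Rightarrow> (nat \<Rightarrow> nat) \<Rightarrow> (nat \<Rightarrow> nat) \<Rightarrow> (nat \<Rightarrow> nat \<Rightarrow> nat \<Rightarrow> nat \<Rightarrow> complex) \<Rightarrow> complex mat" where
  "block_mat m dr dc E = mat (sum dr {1..m}) (sum dc {1..m})
     (\<lambda>(r, c). E (blk dr r) (blk dc c) (r - offs dr (blk dr r)) (c - offs dc (blk dc c)))"

definition eps :: "nat \<Rightarrow> nat \<Rightarrow> complex" where
  "eps n i = (if i < n then 1 else -1)"

definition Amat :: "nat \<Rightarrow> (nat \<Rightarrow> nat) \<Rightarrow> (nat \<Rightarrow> nat \<Rightarrow> complex mat) \<Rightarrow> complex mat" where
  "Amat n dv B = block_mat (2*n-1) dv dv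
     (\<lambda>i j a b. if 1 \<le> j \<and> j \<le> 2*n-2 \<and> i = j + 1 then B i j $$ (a, b) else 0)"

definition Bmat :: "nat \<Rightarrow> (nat \<Rightarrow> nat) \<Rightarrow> (nat \<Rightarrow> nat \<Rightarrow> complex mat) \<Rightarrow> complex mat" where
  "Bmat n dv B = block_mat (2*n-1) dv dv
     (\<lambda>i j a b. if 1 \<le> i \<and> i \<le> 2*n-2 \<and> j = i + 1 then eps n i * B i j $$ (a, b) else 0)"

definition Gmat :: "nat \<Rightarrow> (nat \<Rightarrow> nat) \<Rightarrow> (nat \<Rightarrow> nat) \<Rightarrow> (nat \<Rightarrow> complex mat) \<Rightarrow> complex mat" where
  "Gmat n dv dw Gam = block_mat (2*n-1) dv dw (\<lambda>i j a b. if i = j then Gam i $$ (a, b) else 0)"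

definition Dmat :: "nat \<Rightarrow> (nat \<Rightarrow> nat) \<Rightarrow> (nat \<Rightarrow> nat) \<Rightarrow> (nat \<Rightarrow> complex mat) \<Rightarrow> complex mat" where
  "Dmat n dv dw Del = block_mat (2*n-1) dw dv (\<lambda>i j a b. if i = j then Del i $$ (a, b) else 0)"

definition msum :: "nat \<Rightarrow> nat \<Rightarrow> ('i \<Rightarrow> complex mat) \<Rightarrow> 'i list \<Rightarrow> complex mat" where
  "msum N M f xs = foldr (\<lambda>x acc. f x + acc) xs (0\<^sub>m N M)"

text \<open>Coefficients of z^m in X(z) and Y(z) (N = dim W).\<close>
definition Xcoeff :: "nat \<Rightarrow> complex mat \<Rightarrow> complex mat \<Rightarrow> complex mat \<Rightarrow> complex mat \<Rightarrow> nat \<Rightarrow> complex mat" where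
  "Xcoeff N A B G D m =
     (if m = 0 then 1\<^sub>m N else if m = 1 then 0\<^sub>m N N
      else - msum N N (\<lambda>j. D * A ^\<^sub>m j * B ^\<^sub>m (m - 2 - j) * G) [0..<m - 1])"

definition Ycoeff :: "nat \<Rightarrow> complex mat \<Rightarrow> complex mat \<Rightarrow> complex mat \<Rightarrow> complex mat \<Rightarrow> nat \<Rightarrow> complex mat" where
  "Ycoeff N A B G D m =
     (if m = 0 then 1\<^sub>m N else if m = 1 then 0\<^sub>m N N
      else msum N N (\<lambda>j. D * B ^\<^sub>m (m - 2 - j) * A ^\<^sub>m j * G) [0..<m - 1])"

definition poly_inverse_pair :: "nat \<Rightarrow> (nat \<Rightarrow> complex mat) \<Rightarrow> (nat \<Rightarrow> complex mat) \<Rightarrow> bool" where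
  "poly_inverse_pair N P Q \<longleftrightarrow>
     (\<forall>m. msum N N (\<lambda>p. P p * Q (m - p)) [0..<Suc m] = (if m = 0 then 1\<^sub>m N else 0\<^sub>m N N)) \<and>
     (\<forall>m. msum N N (\<lambda>p. Q p * P (m - p)) [0..<Suc m] = (if m = 0 then 1\<^sub>m N else 0\<^sub>m N N))"

end

(*
  Write C = Gam Del. Read blockwise on the diagonal, the preprojective relations say exactly
  that C + A B = B A; the signs eps_i absorb the orientation of the quiver towards the middle vertex.
  With P(z) = sum A^j B^k z^(j+k) = (1 - zA)^-1 (1 - zB)^-1 and
  Q(z) = sum B^k A^j z^(j+k) = (1 - zB)^-1 (1 - zA)^-1 we have X = 1 - z^2 Del P Gam and
  Y = 1 + z^2 Del Q Gam, and
    Q - P = P ((1 - zB)(1 - zA) - (1 - zA)(1 - zB)) Q = z^2 P (B A - A B) Q = z^2 P C Q,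
  and symmetrically Q - P = z^2 Q C P. Multiplying out gives
  X Y = 1 + z^2 Del (Q - P - z^2 P C Q) Gam = 1, and likewise Y X = 1. The identities for P and Q
  only use c + x y = y x, so they hold coefficientwise in any ring.
*)

theory Submission
  imports Defs
begin

section \<open>Cauchy products in a ring\<close>

context ring
begin

definition cauchy_prod :: "(nat \<Rightarrow> 'a) \<Rightarrow> (nat \<Rightarrow> 'a) \<Rightarrow> nat \<Rightarrow> 'a" where
  "cauchy_prod f g u = (\<Oplus>s\<in>{..u}. f s \<otimes> g (u - s))"

definition one_seq :: "nat \<Rightarrow> 'a" where
  "one_seq s = (if s = 0 then \<one> else \<zero>)"

definition shift_seq :: "(nat \<Rightarrow> 'a) \<Rightarrow> nat \<Rightarrow> 'a" where
  "shift_seq f s = (if s = 0 then \<zero> else f (s - 1))"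

lemma one_seq_closed [simp]: "one_seq s \<in> carrier R"
  by (simp add: one_seq_def)

lemma shift_seq_range [simp]: "range f \<subseteq> carrier R \<Longrightarrow> range (shift_seq f) \<subseteq> carrier R"
  by (auto simp: shift_seq_def)

lemma cauchy_prod_closed [simp]:
  "range f \<subseteq> carrier R \<Longrightarrow> range g \<subseteq> carrier R \<Longrightarrow> cauchy_prod f g u \<in> carrier R"
  unfolding cauchy_prod_def by (auto simp: image_subset_iff intro!: finsum_closed)

lemma cauchy_prod_0 [simp]:
  "range f \<subseteq> carrier R \<Longrightarrow> range g \<subseteq> carrier R \<Longrightarrow> cauchy_prod f g 0 = f 0 \<otimes> g 0"
  unfolding cauchy_prod_def by (auto simp: image_subset_iff)

lemma cauchy_prod_Suc_left:
  assumes "range f \<subseteq> carrier R" "range g \<subseteq> carrier R"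
  shows "cauchy_prod f g (Suc u) = cauchy_prod (\<lambda>s. f (Suc s)) g u \<oplus> f 0 \<otimes> g (Suc u)"
  using assms unfolding cauchy_prod_def by (subst finsum_Suc2) (auto simp: image_subset_iff)

lemma cauchy_prod_Suc_right:
  assumes "range f \<subseteq> carrier R" "range g \<subseteq> carrier R"
  shows "cauchy_prod f g (Suc u) = f (Suc u) \<otimes> g 0 \<oplus> cauchy_prod f (\<lambda>t. g (Suc t)) u"
  using assms unfolding cauchy_prod_def
  by (auto simp: Suc_diff_le image_subset_iff intro!: finsum_cong')

lemma cauchy_prod_mult_left:
  assumes "a \<in> carrier R" "range f \<subseteq> carrier R" "range g \<subseteq> carrier R"
  shows "cauchy_prod (\<lambda>s. a \<otimes> f s) g u = a \<otimes> cauchy_prod f g u"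
  using assms unfolding cauchy_prod_def by (subst finsum_rdistr) (auto simp: m_assoc image_subset_iff)

lemma cauchy_prod_mult_right:
  assumes "a \<in> carrier R" "range f \<subseteq> carrier R" "range g \<subseteq> carrier R"
  shows "cauchy_prod f (\<lambda>t. g t \<otimes> a) u = cauchy_prod f g u \<otimes> a"
  using assms unfolding cauchy_prod_def by (subst finsum_ldistr) (auto simp: m_assoc image_subset_iff)

lemma cauchy_prod_add_left:
  assumes "range f \<subseteq> carrier R" "range h \<subseteq> carrier R" "range g \<subseteq> carrier R"
  shows "cauchy_prod (\<lambda>s. f s \<oplus> h s) g u = cauchy_prod f g u \<oplus> cauchy_prod h g u"
  using assms unfolding cauchy_prod_def by (subst finsum_addf[symmetric]) (auto simp: l_distr image_subset_iff)

lemma cauchy_prod_add_right: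
  assumes "range f \<subseteq> carrier R" "range g \<subseteq> carrier R" "range h \<subseteq> carrier R"
  shows "cauchy_prod f (\<lambda>t. g t \<oplus> h t) u = cauchy_prod f g u \<oplus> cauchy_prod f h u"
  using assms unfolding cauchy_prod_def by (subst finsum_addf[symmetric]) (auto simp: r_distr image_subset_iff)

lemma cauchy_prod_one_left:
  assumes "range g \<subseteq> carrier R"
  shows "cauchy_prod one_seq g u = g u"
proof -
  have "cauchy_prod one_seq g u = (\<Oplus>s\<in>{..u}. if 0 = s then g (u - s) else \<zero>)"
    using assms unfolding cauchy_prod_def one_seq_def by (intro finsum_cong') (auto simp: image_subset_iff)
  also have "\<dots> = g u"
    using assms by (subst add.finprod_singleton) (auto simp: image_subset_iff)
  finally show ?thesis .
qed

lemma cauchy_prod_one_right: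
  assumes "range f \<subseteq> carrier R"
  shows "cauchy_prod f one_seq u = f u"
proof -
  have "cauchy_prod f one_seq u = (\<Oplus>s\<in>{..u}. if u = s then f s else \<zero>)"
    using assms unfolding cauchy_prod_def one_seq_def by (intro finsum_cong') (auto simp: image_subset_iff)
  also have "\<dots> = f u"
    using assms by (subst add.finprod_singleton) (auto simp: image_subset_iff)
  finally show ?thesis .
qed

lemma cauchy_prod_one_plus:
  assumes "range f \<subseteq> carrier R" "range g \<subseteq> carrier R"
  shows "cauchy_prod (\<lambda>s. one_seq s \<oplus> f s) (\<lambda>t. one_seq t \<oplus> g t) u
    = one_seq u \<oplus> f u \<oplus> g u \<oplus> cauchy_prod f g u"
  using assms
  by (simp add: cauchy_prod_add_left cauchy_prod_add_right cauchy_prod_one_left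
      cauchy_prod_one_right image_subset_iff a_ac)

lemma cauchy_prod_shift_left:
  assumes "range f \<subseteq> carrier R" "range g \<subseteq> carrier R"
  shows "cauchy_prod (shift_seq f) g = shift_seq (cauchy_prod f g)"
proof
  fix u show "cauchy_prod (shift_seq f) g u = shift_seq (cauchy_prod f g) u"
    using assms by (cases u) (auto simp: cauchy_prod_Suc_left shift_seq_def image_subset_iff)
qed

lemma cauchy_prod_shift_right:
  assumes "range f \<subseteq> carrier R" "range g \<subseteq> carrier R"
  shows "cauchy_prod f (shift_seq g) = shift_seq (cauchy_prod f g)"
proof
  fix u show "cauchy_prod f (shift_seq g) u = shift_seq (cauchy_prod f g) u"
    using assms by (cases u) (auto simp: cauchy_prod_Suc_right shift_seq_def image_subset_iff)
qed

lemma cauchy_prod_minus_left: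
  assumes "range f \<subseteq> carrier R" "range g \<subseteq> carrier R"
  shows "cauchy_prod (\<lambda>s. \<ominus> f s) g u = \<ominus> cauchy_prod f g u"
proof -
  have "cauchy_prod (\<lambda>s. \<ominus> f s) g u = cauchy_prod (\<lambda>s. \<ominus> \<one> \<otimes> f s) g u"
    using assms by (simp add: l_minus image_subset_iff)
  also have "\<dots> = \<ominus> cauchy_prod f g u"
    using assms by (simp add: cauchy_prod_mult_left l_minus)
  finally show ?thesis .
qed

lemma cauchy_prod_minus_right:
  assumes "range f \<subseteq> carrier R" "range g \<subseteq> carrier R"
  shows "cauchy_prod f (\<lambda>t. \<ominus> g t) u = \<ominus> cauchy_prod f g u"
proof -
  have "cauchy_prod f (\<lambda>t. \<ominus> g t) u = cauchy_prod f (\<lambda>t. g t \<otimes> \<ominus> \<one>) u"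
    using assms by (simp add: r_minus image_subset_iff)
  also have "\<dots> = \<ominus> cauchy_prod f g u"
    using assms by (simp add: cauchy_prod_mult_right r_minus)
  finally show ?thesis .
qed

text \<open>\<open>pow_conv x y u\<close> is the coefficient of \<open>z\<^sup>u\<close> in \<open>(1 - z x)\<^sup>-\<^sup>1 (1 - z y)\<^sup>-\<^sup>1\<close>.\<close>

definition pow_conv :: "'a \<Rightarrow> 'a \<Rightarrow> nat \<Rightarrow> 'a" where
  "pow_conv x y = cauchy_prod (\<lambda>j. x [^] (j::nat)) (\<lambda>k. y [^] (k::nat))"

lemma pow_conv_closed [simp]:
  "x \<in> carrier R \<Longrightarrow> y \<in> carrier R \<Longrightarrow> pow_conv x y u \<in> carrier R"
  unfolding pow_conv_def by (simp add: image_subset_iff)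

lemma pow_conv_0 [simp]: "x \<in> carrier R \<Longrightarrow> y \<in> carrier R \<Longrightarrow> pow_conv x y 0 = \<one>"
  unfolding pow_conv_def by (simp add: image_subset_iff)

lemma pow_conv_Suc_left:
  assumes x: "x \<in> carrier R" and y: "y \<in> carrier R"
  shows "pow_conv x y (Suc u) = x \<otimes> pow_conv x y u \<oplus> y [^] Suc u"
proof -
  have "pow_conv x y (Suc u) = cauchy_prod (\<lambda>j. x \<otimes> x [^] j) (\<lambda>k. y [^] k) u \<oplus> y [^] Suc u"
    unfolding pow_conv_def using x y
    by (subst cauchy_prod_Suc_left) (auto simp: image_subset_iff nat_pow_Suc2 simp del: nat_pow_Suc Group.nat_pow_Suc)
  then show ?thesis
    unfolding pow_conv_def using x y by (simp add: cauchy_prod_mult_left image_subset_iff)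
qed

lemma pow_conv_Suc_right:
  assumes x: "x \<in> carrier R" and y: "y \<in> carrier R"
  shows "pow_conv x y (Suc u) = pow_conv x y u \<otimes> y \<oplus> x [^] Suc u"
proof -
  have "pow_conv x y (Suc u) = x [^] Suc u \<oplus> cauchy_prod (\<lambda>j. x [^] j) (\<lambda>k. y [^] k \<otimes> y) u"
    unfolding pow_conv_def using x y
    by (subst cauchy_prod_Suc_right) (auto simp: image_subset_iff simp del: nat_pow_Suc)
  then show ?thesis
    unfolding pow_conv_def using x y by (simp add: cauchy_prod_mult_right image_subset_iff a_comm)
qed

lemma pow_conv_rev:
  assumes x: "x \<in> carrier R" and y: "y \<in> carrier R"
  shows "pow_conv x y u = (\<Oplus>j\<in>{..u}. x [^] (u - j) \<otimes> y [^] j)"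
proof -
  have reflect: "(\<lambda>j. u - j) ` {..u} = {..u}"
  proof
    show "{..u} \<subseteq> (\<lambda>j. u - j) ` {..u}"
    proof
      fix j assume "j \<in> {..u}"
      then show "j \<in> (\<lambda>j. u - j) ` {..u}" by (intro image_eqI[of _ _ "u - j"]) auto
    qed
  qed auto
  have "pow_conv x y u = (\<Oplus>j\<in>(\<lambda>j. u - j) ` {..u}. x [^] j \<otimes> y [^] (u - j))"
    unfolding pow_conv_def cauchy_prod_def reflect ..
  also have "\<dots> = (\<Oplus>j\<in>{..u}. x [^] (u - j) \<otimes> y [^] (u - (u - j)))"
    using x y by (intro finsum_reindex) (auto simp: inj_on_def)
  also have "\<dots> = (\<Oplus>j\<in>{..u}. x [^] (u - j) \<otimes> y [^] j)"
    using x y by (intro finsum_cong') auto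
  finally show ?thesis .
qed

lemma pow_conv_commutator:
  assumes x: "x \<in> carrier R" and y: "y \<in> carrier R" and c: "c \<in> carrier R"
    and comm: "c \<oplus> x \<otimes> y = y \<otimes> x"
  shows "cauchy_prod (\<lambda>s. y [^] s \<otimes> c) (pow_conv y x) u \<oplus> x \<otimes> pow_conv y x (Suc u)
    = pow_conv y x (Suc u) \<otimes> x"
proof (induction u)
  case 0
  have "pow_conv y x (Suc 0) = y \<oplus> x"
    using x y by (simp add: pow_conv_Suc_left)
  then show ?case
    using x y c by (simp add: r_distr l_distr comm[symmetric] a_ac image_subset_iff)
next
  case (Suc u)
  let ?T = "cauchy_prod (\<lambda>s. y [^] s \<otimes> c) (pow_conv y x)" and ?Q = "pow_conv y x"
  have T_Suc: "?T (Suc u) = y \<otimes> ?T u \<oplus> c \<otimes> ?Q (Suc u)"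
  proof -
    have "?T (Suc u) = cauchy_prod (\<lambda>s. y \<otimes> (y [^] s \<otimes> c)) ?Q u \<oplus> c \<otimes> ?Q (Suc u)"
      using x y c by (subst cauchy_prod_Suc_left)
        (auto simp: image_subset_iff nat_pow_Suc2 m_assoc simp del: nat_pow_Suc Group.nat_pow_Suc)
    then show ?thesis
      using x y c by (simp add: cauchy_prod_mult_left image_subset_iff)
  qed
  have x_pow: "x \<otimes> x [^] n = x [^] n \<otimes> x" for n :: nat
    using x by (simp add: nat_pow_Suc2[symmetric])
  have "?T (Suc u) \<oplus> x \<otimes> ?Q (Suc (Suc u))
      = y \<otimes> ?T u \<oplus> (c \<oplus> x \<otimes> y) \<otimes> ?Q (Suc u) \<oplus> x \<otimes> x [^] Suc (Suc u)"
    using x y c by (simp add: T_Suc pow_conv_Suc_left[of y x "Suc u"] r_distr l_distr m_assoc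
        a_ac image_subset_iff del: nat_pow_Suc Group.nat_pow_Suc)
  also have "\<dots> = y \<otimes> (?T u \<oplus> x \<otimes> ?Q (Suc u)) \<oplus> x [^] Suc (Suc u) \<otimes> x"
    using x y c by (simp add: comm r_distr m_assoc x_pow image_subset_iff
        del: nat_pow_Suc Group.nat_pow_Suc)
  also have "\<dots> = ?Q (Suc (Suc u)) \<otimes> x"
    using x y by (simp add: Suc.IH pow_conv_Suc_left[of y x "Suc u"] l_distr m_assoc
        del: nat_pow_Suc Group.nat_pow_Suc)
  finally show ?case .
qed

text \<open>With \<open>P = pow_conv x y\<close>, \<open>Q = pow_conv y x\<close> and \<open>c = y x - x y\<close>, this is the
  coefficient of \<open>z\<^sup>u\<^sup>+\<^sup>2\<close> in \<open>Q - P = z\<^sup>2 P c Q\<close>.\<close>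

lemma pow_conv_diff:
  assumes x: "x \<in> carrier R" and y: "y \<in> carrier R" and c: "c \<in> carrier R"
    and comm: "c \<oplus> x \<otimes> y = y \<otimes> x"
  shows "cauchy_prod (\<lambda>s. pow_conv x y s \<otimes> c) (pow_conv y x) u \<oplus> pow_conv x y (Suc (Suc u))
    = pow_conv y x (Suc (Suc u))"
proof (induction u)
  case 0
  have "pow_conv x y (Suc 0) = x \<oplus> y" "pow_conv y x (Suc 0) = y \<oplus> x"
    using x y by (simp_all add: pow_conv_Suc_left)
  then show ?case
    using x y c by (simp add: pow_conv_Suc_left[of _ _ "Suc 0"] r_distr comm[symmetric] a_ac
        image_subset_iff)
next
  case (Suc u)
  let ?S = "cauchy_prod (\<lambda>s. pow_conv x y s \<otimes> c) (pow_conv y x)"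
    and ?T = "cauchy_prod (\<lambda>s. y [^] s \<otimes> c) (pow_conv y x)"
    and ?P = "pow_conv x y" and ?Q = "pow_conv y x"
  have "?S (Suc u) = cauchy_prod (\<lambda>s. x \<otimes> (?P s \<otimes> c) \<oplus> y [^] Suc s \<otimes> c) ?Q u \<oplus> c \<otimes> ?Q (Suc u)"
    using x y c by (subst cauchy_prod_Suc_left)
      (auto simp: image_subset_iff pow_conv_Suc_left l_distr m_assoc simp del: nat_pow_Suc Group.nat_pow_Suc)
  also have "\<dots> = x \<otimes> ?S u \<oplus> ?T (Suc u)"
    using x y c by (simp add: cauchy_prod_add_left cauchy_prod_mult_left cauchy_prod_Suc_left[of _ ?Q]
        a_assoc image_subset_iff del: nat_pow_Suc Group.nat_pow_Suc)
  finally have S_Suc: "?S (Suc u) = x \<otimes> ?S u \<oplus> ?T (Suc u)" .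
  have "?S (Suc u) \<oplus> ?P (Suc (Suc (Suc u))) = x \<otimes> (?S u \<oplus> ?P (Suc (Suc u))) \<oplus> ?T (Suc u) \<oplus> y [^] Suc (Suc (Suc u))"
    using x y c by (simp add: S_Suc pow_conv_Suc_left[of x y "Suc (Suc u)"] r_distr a_ac image_subset_iff
        del: nat_pow_Suc Group.nat_pow_Suc)
  also have "\<dots> = ?T (Suc u) \<oplus> x \<otimes> ?Q (Suc (Suc u)) \<oplus> y [^] Suc (Suc (Suc u))"
    using x y c by (simp add: Suc.IH a_ac image_subset_iff del: nat_pow_Suc Group.nat_pow_Suc)
  also have "\<dots> = ?Q (Suc (Suc (Suc u)))"
    using x y c by (simp add: pow_conv_commutator[OF x y c comm] pow_conv_Suc_right[of y x "Suc (Suc u)"]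
        del: nat_pow_Suc Group.nat_pow_Suc)
  finally show ?case .
qed

text \<open>The mirrored identity is the same identity for \<open>(y, x, \<ominus> c)\<close>.\<close>

lemma pow_conv_diff_mirror:
  assumes x: "x \<in> carrier R" and y: "y \<in> carrier R" and c: "c \<in> carrier R"
    and comm: "c \<oplus> x \<otimes> y = y \<otimes> x"
  shows "cauchy_prod (\<lambda>s. pow_conv y x s \<otimes> c) (pow_conv x y) u \<oplus> pow_conv x y (Suc (Suc u))
    = pow_conv y x (Suc (Suc u))"
proof -
  let ?R = "cauchy_prod (\<lambda>s. pow_conv y x s \<otimes> c) (pow_conv x y) u"
  have comm': "\<ominus> c \<oplus> y \<otimes> x = x \<otimes> y"
    using x y c by (simp add: comm[symmetric] a_assoc[symmetric] l_neg)
  have "cauchy_prod (\<lambda>s. pow_conv y x s \<otimes> \<ominus> c) (pow_conv x y) u = \<ominus> ?R"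
    using x y c by (simp add: r_minus cauchy_prod_minus_left image_subset_iff)
  then have "\<ominus> ?R \<oplus> pow_conv y x (Suc (Suc u)) = pow_conv x y (Suc (Suc u))"
    using pow_conv_diff[OF y x _ comm', of u] c by simp
  then show ?thesis
    using x y c by (auto simp: a_assoc[symmetric] r_neg image_subset_iff dest: sym)
qed

lemma shift_seq_mult_right:
  "c \<in> carrier R \<Longrightarrow> (\<lambda>s. shift_seq f s \<otimes> c) = shift_seq (\<lambda>s. f s \<otimes> c)"
  by (auto simp: shift_seq_def)

lemma cauchy_prod_shift2_diff:
  assumes f: "range f \<subseteq> carrier R" and g: "range g \<subseteq> carrier R" and c: "c \<in> carrier R"
    and P: "range P \<subseteq> carrier R" and "P 0 = Q 0" "P (Suc 0) = Q (Suc 0)"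
    and diff: "\<And>u. cauchy_prod (\<lambda>s. f s \<otimes> c) g u \<oplus> P (Suc (Suc u)) = Q (Suc (Suc u))"
  shows "cauchy_prod (\<lambda>s. shift_seq (shift_seq f) s \<otimes> c) (shift_seq (shift_seq g)) m
      \<oplus> shift_seq (shift_seq P) m = shift_seq (shift_seq Q) m"
proof -
  let ?S = "cauchy_prod (\<lambda>s. f s \<otimes> c) g"
  have fc: "range (\<lambda>s. f s \<otimes> c) \<subseteq> carrier R"
    using f c by (auto simp: image_subset_iff)
  have "cauchy_prod (\<lambda>s. shift_seq (shift_seq f) s \<otimes> c) (shift_seq (shift_seq g)) m
      = shift_seq (shift_seq (shift_seq (shift_seq ?S))) m"
    using fc g c by (simp add: shift_seq_mult_right cauchy_prod_shift_left cauchy_prod_shift_right)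
  moreover consider "m = 0 \<or> m = 1" | "m = 2" | "m = 3" | u where "m = Suc (Suc (Suc (Suc u)))"
    by (metis One_nat_def Suc_1 numeral_3_eq_3 not0_implies_Suc)
  then have "shift_seq (shift_seq (shift_seq (shift_seq ?S))) m \<oplus> shift_seq (shift_seq P) m
      = shift_seq (shift_seq Q) m"
  proof cases
    case 1
    then show ?thesis by (auto simp: shift_seq_def)
  next
    case 2
    then show ?thesis using P by (auto simp: shift_seq_def image_subset_iff \<open>P 0 = Q 0\<close>[symmetric])
  next
    case 3
    then show ?thesis using P by (auto simp: shift_seq_def image_subset_iff \<open>P (Suc 0) = Q (Suc 0)\<close>[symmetric])
  next
    case 4
    then show ?thesis using diff by (simp add: shift_seq_def)
  qed
  ultimately show ?thesis by simp
qed

definition z2_pow_conv :: "'a \<Rightarrow> 'a \<Rightarrow> nat \<Rightarrow> 'a" where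
  "z2_pow_conv x y = shift_seq (shift_seq (pow_conv x y))"

lemma z2_pow_conv_closed [simp]:
  "x \<in> carrier R \<Longrightarrow> y \<in> carrier R \<Longrightarrow> z2_pow_conv x y s \<in> carrier R"
  by (simp add: z2_pow_conv_def shift_seq_def)

lemma z2_pow_conv_0 [simp]: "z2_pow_conv x y 0 = \<zero>" and z2_pow_conv_1 [simp]: "z2_pow_conv x y (Suc 0) = \<zero>"
  by (simp_all add: z2_pow_conv_def shift_seq_def)

lemma z2_pow_conv_Suc_Suc [simp]: "z2_pow_conv x y (Suc (Suc u)) = pow_conv x y u"
  by (simp add: z2_pow_conv_def shift_seq_def)

lemma z2_pow_conv_series_inverse:
  assumes x: "x \<in> carrier R" and y: "y \<in> carrier R" and c: "c \<in> carrier R"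
    and comm: "c \<oplus> x \<otimes> y = y \<otimes> x"
  shows "cauchy_prod (\<lambda>s. \<ominus> z2_pow_conv x y s \<otimes> c) (z2_pow_conv y x) m
      \<oplus> \<ominus> z2_pow_conv x y m \<oplus> z2_pow_conv y x m = \<zero>"
    and "cauchy_prod (\<lambda>s. z2_pow_conv y x s \<otimes> c) (\<lambda>t. \<ominus> z2_pow_conv x y t) m
      \<oplus> z2_pow_conv y x m \<oplus> \<ominus> z2_pow_conv x y m = \<zero>"
proof -
  let ?a = "z2_pow_conv x y" and ?b = "z2_pow_conv y x"
  have ab: "range ?a \<subseteq> carrier R" "range ?b \<subseteq> carrier R"
    using x y by auto
  have P1: "pow_conv x y (Suc 0) = pow_conv y x (Suc 0)"
    using x y by (simp add: pow_conv_Suc_left a_comm)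
  have S: "cauchy_prod (\<lambda>s. ?a s \<otimes> c) ?b m \<oplus> ?a m = ?b m"
    unfolding z2_pow_conv_def using x y c P1
    by (intro cauchy_prod_shift2_diff pow_conv_diff[OF x y c comm]) (auto simp: image_subset_iff)
  have R: "cauchy_prod (\<lambda>s. ?b s \<otimes> c) ?a m \<oplus> ?a m = ?b m"
    unfolding z2_pow_conv_def using x y c P1
    by (intro cauchy_prod_shift2_diff pow_conv_diff_mirror[OF x y c comm]) (auto simp: image_subset_iff)
  have "cauchy_prod (\<lambda>s. \<ominus> ?a s \<otimes> c) ?b m = \<ominus> cauchy_prod (\<lambda>s. ?a s \<otimes> c) ?b m"
    using ab c by (simp add: l_minus cauchy_prod_minus_left image_subset_iff)
  then show "cauchy_prod (\<lambda>s. \<ominus> ?a s \<otimes> c) ?b m \<oplus> \<ominus> ?a m \<oplus> ?b m = \<zero>"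
    using ab c by (simp add: S[symmetric] minus_add[symmetric] l_neg image_subset_iff)
  have "cauchy_prod (\<lambda>s. ?b s \<otimes> c) (\<lambda>t. \<ominus> ?a t) m = \<ominus> cauchy_prod (\<lambda>s. ?b s \<otimes> c) ?a m"
    using ab c by (simp add: cauchy_prod_minus_right image_subset_iff)
  then show "cauchy_prod (\<lambda>s. ?b s \<otimes> c) (\<lambda>t. \<ominus> ?a t) m \<oplus> ?b m \<oplus> \<ominus> ?a m = \<zero>"
    using ab c by (simp add: R[symmetric] a_assoc[symmetric] l_neg r_neg image_subset_iff)
qed

end

section \<open>Sandwiching square matrices\<close>

abbreviation cmat_ring :: "nat \<Rightarrow> (complex mat, unit) ring_scheme" where
  "cmat_ring K \<equiv> ring_mat TYPE(complex) K ()"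

lemma msum_Nil [simp]: "msum N M f [] = 0\<^sub>m N M"
  by (simp add: msum_def)

lemma msum_Cons [simp]: "msum N M f (x # xs) = f x + msum N M f xs"
  by (simp add: msum_def)

lemma msum_eq_finsum:
  assumes "distinct xs" and "\<And>x. x \<in> set xs \<Longrightarrow> f x \<in> carrier_mat K K"
  shows "msum K K f xs = finsum (cmat_ring K) f (set xs)"
  using assms
proof (induction xs)
  case Nil
  interpret R: ring "cmat_ring K" by (rule ring_mat)
  show ?case by (simp add: ring_mat_simps)
next
  case (Cons x xs)
  interpret R: ring "cmat_ring K" by (rule ring_mat)
  have "finsum (cmat_ring K) f (set (x # xs)) = f x \<oplus>\<^bsub>cmat_ring K\<^esub> finsum (cmat_ring K) f (set xs)"
    using Cons.prems by (simp add: R.finsum_insert ring_mat_simps Pi_def)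
  then show ?case using Cons by (simp add: ring_mat_simps)
qed

lemma sandwich_mult:
  assumes D: "D \<in> carrier_mat N K" and G: "G \<in> carrier_mat K N"
    and F: "F \<in> carrier_mat K K" and H: "H \<in> carrier_mat K K"
  shows "D * F * G * (D * H * G) = D * (F * (G * D) * H) * G"
proof -
  have "D * F * G * (D * H * G) = D * (F * (G * (D * (H * G))))"
    using assms by (simp add: assoc_mult_mat[of _ N K _ K _ N] assoc_mult_mat[of _ N N _ K _ N]
        assoc_mult_mat[of _ N K _ N _ N] assoc_mult_mat[of _ K K _ N _ N] assoc_mult_mat[of _ K N _ K _ N])
  also have "\<dots> = D * (F * (G * D) * H) * G"
    using assms by (simp add: assoc_mult_mat[of _ N K _ K _ N] assoc_mult_mat[of _ K K _ K _ N]
        assoc_mult_mat[of _ K K _ K _ K] assoc_mult_mat[of _ K N _ K _ K] assoc_mult_mat[of _ K N _ K _ N])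
  finally show ?thesis .
qed

lemma finsum_sandwich:
  assumes "finite S" and D: "D \<in> carrier_mat N K" and G: "G \<in> carrier_mat K N"
    and h: "\<And>s. s \<in> S \<Longrightarrow> h s \<in> carrier_mat K K"
  shows "finsum (cmat_ring N) (\<lambda>s. D * h s * G) S = D * finsum (cmat_ring K) h S * G"
  using assms(1) h
proof (induction S rule: finite_induct)
  case empty
  interpret RK: ring "cmat_ring K" by (rule ring_mat)
  interpret RN: ring "cmat_ring N" by (rule ring_mat)
  show ?case using D G by (simp add: ring_mat_simps)
next
  case (insert s S)
  interpret RK: ring "cmat_ring K" by (rule ring_mat)
  interpret RN: ring "cmat_ring N" by (rule ring_mat)
  have hS: "finsum (cmat_ring K) h S \<in> carrier_mat K K"
    using insert.prems RK.finsum_closed[of h S] by (auto simp: ring_mat_simps)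
  have DhG: "D * h t * G \<in> carrier_mat N N" if "t \<in> insert s S" for t
    using insert.prems[OF that] D G by (meson mult_carrier_mat)
  have "finsum (cmat_ring N) (\<lambda>s. D * h s * G) (insert s S) = D * h s * G + D * finsum (cmat_ring K) h S * G"
    using insert DhG by (subst RN.finsum_insert) (auto simp: ring_mat_simps)
  also have "\<dots> = (D * h s + D * finsum (cmat_ring K) h S) * G"
    using insert.prems D G hS by (intro add_mult_distrib_mat[symmetric]) auto
  also have "\<dots> = D * (h s + finsum (cmat_ring K) h S) * G"
    using insert.prems by (simp add: mult_add_distrib_mat[OF D _ hS])
  finally show ?case
    using insert hS by (simp add: RK.finsum_insert ring_mat_simps Pi_def)
qed

lemma sandwich_add:
  assumes "D \<in> carrier_mat N K" "G \<in> carrier_mat K N" "F \<in> carrier_mat K K" "H \<in> carrier_mat K K"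
  shows "D * (F + H) * G = D * F * G + D * H * G"
  using assms by (simp add: mult_add_distrib_mat add_mult_distrib_mat[of _ N K])

lemma msum_sandwich:
  assumes D: "D \<in> carrier_mat N K" and G: "G \<in> carrier_mat K N"
    and h: "\<And>j. h j \<in> carrier_mat K K"
  shows "msum N N (\<lambda>j. D * h j * G) [0..<Suc u] = D * finsum (cmat_ring K) h {..u} * G"
proof -
  have "msum N N (\<lambda>j. D * h j * G) [0..<Suc u] = finsum (cmat_ring N) (\<lambda>j. D * h j * G) (set [0..<Suc u])"
    using D G h by (intro msum_eq_finsum) auto
  also have "set [0..<Suc u] = {..u}"
    by auto
  finally show ?thesis
    using D G h by (simp add: finsum_sandwich)
qed

lemma pow_conv_mat:
  assumes A: "A \<in> carrier_mat K K" and B: "B \<in> carrier_mat K K"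
  shows "ring.pow_conv (cmat_ring K) A B u = finsum (cmat_ring K) (\<lambda>j. A ^\<^sub>m j * B ^\<^sub>m (u - j)) {..u}"
    and "ring.pow_conv (cmat_ring K) B A u = finsum (cmat_ring K) (\<lambda>j. B ^\<^sub>m (u - j) * A ^\<^sub>m j) {..u}"
proof -
  interpret R: ring "cmat_ring K" by (rule ring_mat)
  show "R.pow_conv A B u = finsum (cmat_ring K) (\<lambda>j. A ^\<^sub>m j * B ^\<^sub>m (u - j)) {..u}"
    unfolding R.pow_conv_def R.cauchy_prod_def using A B
    by (intro R.finsum_cong') (auto simp: pow_mat_ring_pow[OF A, symmetric] pow_mat_ring_pow[OF B, symmetric] ring_mat_simps)
  show "R.pow_conv B A u = finsum (cmat_ring K) (\<lambda>j. B ^\<^sub>m (u - j) * A ^\<^sub>m j) {..u}"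
    using A B by (simp add: R.pow_conv_rev ring_mat_simps)
      (auto simp: pow_mat_ring_pow[OF A, symmetric] pow_mat_ring_pow[OF B, symmetric] ring_mat_simps
        intro!: R.finsum_cong')
qed

lemma cauchy_prod_sandwich:
  assumes D: "D \<in> carrier_mat N K" and G: "G \<in> carrier_mat K N"
    and f: "\<And>s. f s \<in> carrier_mat K K" and g: "\<And>s. g s \<in> carrier_mat K K"
  shows "ring.cauchy_prod (cmat_ring N) (\<lambda>s. D * f s * G) (\<lambda>t. D * g t * G) m
    = D * ring.cauchy_prod (cmat_ring K) (\<lambda>s. f s * (G * D)) g m * G"
proof -
  interpret RK: ring "cmat_ring K" by (rule ring_mat)
  interpret RN: ring "cmat_ring N" by (rule ring_mat)
  have fCg: "f s * (G * D) * g t \<in> carrier_mat K K" for s t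
    using f g G D by (meson mult_carrier_mat)
  have "RN.cauchy_prod (\<lambda>s. D * f s * G) (\<lambda>t. D * g t * G) m
      = finsum (cmat_ring N) (\<lambda>s. D * (f s * (G * D) * g (m - s)) * G) {..m}"
    unfolding RN.cauchy_prod_def using D G f g
    by (intro RN.finsum_cong') (auto simp: ring_mat_simps sandwich_mult fCg)
  also have "\<dots> = D * RK.cauchy_prod (\<lambda>s. f s * (G * D)) g m * G"
    unfolding RK.cauchy_prod_def using D G fCg by (subst finsum_sandwich) (auto simp: ring_mat_simps)
  finally show ?thesis .
qed

lemma sandwich_one_plus:
  assumes D: "D \<in> carrier_mat N K" and G: "G \<in> carrier_mat K N"
    and f: "\<And>s. f s \<in> carrier_mat K K" and g: "\<And>s. g s \<in> carrier_mat K K"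
    and zero: "\<And>m. ring.cauchy_prod (cmat_ring K) (\<lambda>s. f s * (G * D)) g m + f m + g m = 0\<^sub>m K K"
  shows "ring.cauchy_prod (cmat_ring N) (\<lambda>s. ring.one_seq (cmat_ring N) s + D * f s * G)
      (\<lambda>t. ring.one_seq (cmat_ring N) t + D * g t * G) m = ring.one_seq (cmat_ring N) m"
proof -
  interpret RK: ring "cmat_ring K" by (rule ring_mat)
  interpret RN: ring "cmat_ring N" by (rule ring_mat)
  let ?C = "RK.cauchy_prod (\<lambda>s. f s * (G * D)) g m"
  have fC: "f s * (G * D) \<in> carrier_mat K K" for s
    using f G D by (meson mult_carrier_mat)
  have C: "?C \<in> carrier_mat K K"
    using RK.cauchy_prod_closed[of "\<lambda>s. f s * (G * D)" g m] fC g by (auto simp: ring_mat_simps)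
  have fg: "range (\<lambda>s. D * f s * G) \<subseteq> carrier (cmat_ring N)" "range (\<lambda>t. D * g t * G) \<subseteq> carrier (cmat_ring N)"
    using D G f g by (auto simp: ring_mat_simps)
  have sand: "D * h * G \<in> carrier (cmat_ring N)" if "h \<in> carrier_mat K K" for h
    using that D G by (simp add: ring_mat_simps)
  have "D * f m * G \<oplus>\<^bsub>cmat_ring N\<^esub> D * g m * G \<oplus>\<^bsub>cmat_ring N\<^esub> D * ?C * G
      = D * ?C * G \<oplus>\<^bsub>cmat_ring N\<^esub> D * f m * G \<oplus>\<^bsub>cmat_ring N\<^esub> D * g m * G"
    using sand f g C by (simp add: RN.a_ac)
  also have "\<dots> = D * ?C * G + D * f m * G + D * g m * G"
    by (simp only: ring_mat_simps)
  also have "\<dots> = D * (?C + f m + g m) * G"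
    using sandwich_add[OF D G _ g, of "?C + f m"] sandwich_add[OF D G C f] C f by simp
  also have "\<dots> = \<zero>\<^bsub>cmat_ring N\<^esub>"
    using D G by (simp add: zero ring_mat_simps)
  finally have sum0: "D * f m * G \<oplus>\<^bsub>cmat_ring N\<^esub> D * g m * G \<oplus>\<^bsub>cmat_ring N\<^esub> D * ?C * G
      = \<zero>\<^bsub>cmat_ring N\<^esub>" .
  have "RN.cauchy_prod (\<lambda>s. RN.one_seq s \<oplus>\<^bsub>cmat_ring N\<^esub> D * f s * G)
      (\<lambda>t. RN.one_seq t \<oplus>\<^bsub>cmat_ring N\<^esub> D * g t * G) m
    = RN.one_seq m \<oplus>\<^bsub>cmat_ring N\<^esub> (D * f m * G \<oplus>\<^bsub>cmat_ring N\<^esub> D * g m * G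
        \<oplus>\<^bsub>cmat_ring N\<^esub> D * ?C * G)"
    using fg sand f g C D G
    by (simp add: RN.cauchy_prod_one_plus cauchy_prod_sandwich RN.a_assoc del: assoc_mult_mat)
  also have "\<dots> = RN.one_seq m"
    unfolding sum0 by simp
  finally show ?thesis
    by (simp add: ring_mat_simps)
qed

lemma msum_conv_eq_cauchy_prod:
  assumes "\<And>p. F p \<in> carrier_mat N N" "\<And>p. H p \<in> carrier_mat N N"
  shows "msum N N (\<lambda>p. F p * H (m - p)) [0..<Suc m] = ring.cauchy_prod (cmat_ring N) F H m"
proof -
  interpret R: ring "cmat_ring N" by (rule ring_mat)
  have FH: "F p * H q \<in> carrier_mat N N" for p q
    using assms by (meson mult_carrier_mat)
  have "set [0..<Suc m] = {..m}" by auto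
  then show ?thesis
    unfolding R.cauchy_prod_def using assms FH
    by (subst msum_eq_finsum) (auto simp: ring_mat_simps intro!: R.finsum_cong')
qed

lemma cmat_ring_a_inv: "X \<in> carrier_mat K K \<Longrightarrow> \<ominus>\<^bsub>cmat_ring K\<^esub> X = - X"
proof -
  interpret R: ring "cmat_ring K" by (rule ring_mat)
  show "X \<in> carrier_mat K K \<Longrightarrow> \<ominus>\<^bsub>cmat_ring K\<^esub> X = - X"
    by (rule R.minus_equality) (auto simp: ring_mat_simps)
qed

lemma Xcoeff_eq:
  assumes A: "A \<in> carrier_mat K K" and B: "B \<in> carrier_mat K K"
    and G: "G \<in> carrier_mat K N" and D: "D \<in> carrier_mat N K"
  shows "Xcoeff N A B G D s
    = ring.one_seq (cmat_ring N) s + D * (- ring.z2_pow_conv (cmat_ring K) A B s) * G"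
proof -
  interpret RK: ring "cmat_ring K" by (rule ring_mat)
  interpret RN: ring "cmat_ring N" by (rule ring_mat)
  consider "s = 0" | "s = Suc 0" | u where "s = Suc (Suc u)"
    by (metis not0_implies_Suc)
  then show ?thesis
  proof cases
    case 3
    have "(\<lambda>j. D * A ^\<^sub>m j * B ^\<^sub>m (u - j) * G) = (\<lambda>j. D * (A ^\<^sub>m j * B ^\<^sub>m (u - j)) * G)"
      using A B D by (simp add: assoc_mult_mat[of D N K _ K _ K])
    moreover have "msum N N (\<lambda>j. D * (A ^\<^sub>m j * B ^\<^sub>m (u - j)) * G) [0..<Suc u] = D * RK.pow_conv A B u * G"
      unfolding pow_conv_mat(1)[OF A B]
      by (rule msum_sandwich[OF D G]) (meson A B mult_carrier_mat pow_carrier_mat)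
    ultimately have "Xcoeff N A B G D s = - (D * RK.pow_conv A B u * G)"
      using 3 by (simp add: Xcoeff_def del: upt_Suc)
    moreover have P: "RK.pow_conv A B u \<in> carrier_mat K K"
      using RK.pow_conv_closed[of A B u] A B by (simp add: ring_mat_simps)
    moreover have "D * RK.pow_conv A B u * G \<in> carrier_mat N N"
      using P G D by (meson mult_carrier_mat)
    ultimately show ?thesis
      using 3 D G by (simp add: RN.one_seq_def ring_mat_simps carrier_matD)
  qed (use A B G D in \<open>auto simp: Xcoeff_def RN.one_seq_def ring_mat_simps\<close>)
qed

lemma Ycoeff_eq:
  assumes A: "A \<in> carrier_mat K K" and B: "B \<in> carrier_mat K K"
    and G: "G \<in> carrier_mat K N" and D: "D \<in> carrier_mat N K"
  shows "Ycoeff N A B G D s = ring.one_seq (cmat_ring N) s + D * ring.z2_pow_conv (cmat_ring K) B A s * G"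
proof -
  interpret RK: ring "cmat_ring K" by (rule ring_mat)
  interpret RN: ring "cmat_ring N" by (rule ring_mat)
  consider "s = 0" | "s = Suc 0" | u where "s = Suc (Suc u)"
    by (metis not0_implies_Suc)
  then show ?thesis
  proof cases
    case 3
    have "(\<lambda>j. D * B ^\<^sub>m (u - j) * A ^\<^sub>m j * G) = (\<lambda>j. D * (B ^\<^sub>m (u - j) * A ^\<^sub>m j) * G)"
      using A B D by (simp add: assoc_mult_mat[of D N K _ K _ K])
    moreover have "msum N N (\<lambda>j. D * (B ^\<^sub>m (u - j) * A ^\<^sub>m j) * G) [0..<Suc u] = D * RK.pow_conv B A u * G"
      unfolding pow_conv_mat(2)[OF A B]
      by (rule msum_sandwich[OF D G]) (meson A B mult_carrier_mat pow_carrier_mat)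
    ultimately have "Ycoeff N A B G D s = D * RK.pow_conv B A u * G"
      using 3 by (simp add: Ycoeff_def del: upt_Suc)
    moreover have P: "RK.pow_conv B A u \<in> carrier_mat K K"
      using RK.pow_conv_closed[of B A u] A B by (simp add: ring_mat_simps)
    moreover have "D * RK.pow_conv B A u * G \<in> carrier_mat N N"
      using P G D by (meson mult_carrier_mat)
    ultimately show ?thesis
      using 3 D G by (simp add: RN.one_seq_def ring_mat_simps carrier_matD)
  qed (use A B G D in \<open>auto simp: Ycoeff_def RN.one_seq_def ring_mat_simps\<close>)
qed

lemma poly_inverse_pair_Xcoeff_Ycoeff:
  assumes A: "A \<in> carrier_mat K K" and B: "B \<in> carrier_mat K K"
    and G: "G \<in> carrier_mat K N" and D: "D \<in> carrier_mat N K"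
    and comm: "G * D + A * B = B * A"
  shows "poly_inverse_pair N (Xcoeff N A B G D) (Ycoeff N A B G D)"
proof -
  interpret RK: ring "cmat_ring K" by (rule ring_mat)
  interpret RN: ring "cmat_ring N" by (rule ring_mat)
  let ?a = "RK.z2_pow_conv A B" and ?b = "RK.z2_pow_conv B A"
  have a: "?a s \<in> carrier_mat K K" and b: "?b s \<in> carrier_mat K K" for s
    using A B RK.z2_pow_conv_closed by (auto simp: ring_mat_simps)
  have GD: "G * D \<in> carrier_mat K K"
    using G D by simp
  have inv: "RK.cauchy_prod (\<lambda>s. - ?a s * (G * D)) ?b m + - ?a m + ?b m = 0\<^sub>m K K"
    "RK.cauchy_prod (\<lambda>s. ?b s * (G * D)) (\<lambda>t. - ?a t) m + ?b m + - ?a m = 0\<^sub>m K K" for m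
    using RK.z2_pow_conv_series_inverse[of A B "G * D" m] A B GD comm a
    by (simp_all add: ring_mat_simps cmat_ring_a_inv)
  have X: "Xcoeff N A B G D = (\<lambda>s. RN.one_seq s + D * - ?a s * G)"
    using Xcoeff_eq[OF A B G D] by auto
  have Y: "Ycoeff N A B G D = (\<lambda>s. RN.one_seq s + D * ?b s * G)"
    using Ycoeff_eq[OF A B G D] by auto
  have carrier: "RN.one_seq s + D * h * G \<in> carrier_mat N N" if "h \<in> carrier_mat K K" for s h
    using that D G RN.one_seq_closed[of s] by (simp add: ring_mat_simps)
  have "msum N N (\<lambda>p. Xcoeff N A B G D p * Ycoeff N A B G D (m - p)) [0..<Suc m] = RN.one_seq m"
    and "msum N N (\<lambda>p. Ycoeff N A B G D p * Xcoeff N A B G D (m - p)) [0..<Suc m] = RN.one_seq m" for m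
  proof -
    have "msum N N (\<lambda>p. Xcoeff N A B G D p * Ycoeff N A B G D (m - p)) [0..<Suc m]
        = RN.cauchy_prod (\<lambda>s. RN.one_seq s + D * - ?a s * G) (\<lambda>t. RN.one_seq t + D * ?b t * G) m"
      unfolding X Y by (rule msum_conv_eq_cauchy_prod) (use carrier a b in auto)
    also have "\<dots> = RN.one_seq m"
      by (rule sandwich_one_plus[OF D G _ _ inv(1)]) (use a b in auto)
    finally show "msum N N (\<lambda>p. Xcoeff N A B G D p * Ycoeff N A B G D (m - p)) [0..<Suc m] = RN.one_seq m" .
    have "msum N N (\<lambda>p. Ycoeff N A B G D p * Xcoeff N A B G D (m - p)) [0..<Suc m]
        = RN.cauchy_prod (\<lambda>s. RN.one_seq s + D * ?b s * G) (\<lambda>t. RN.one_seq t + D * - ?a t * G) m"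
      unfolding X Y by (rule msum_conv_eq_cauchy_prod) (use carrier a b in auto)
    also have "\<dots> = RN.one_seq m"
      by (rule sandwich_one_plus[OF D G _ _ inv(2)]) (use a b in auto)
    finally show "msum N N (\<lambda>p. Ycoeff N A B G D p * Xcoeff N A B G D (m - p)) [0..<Suc m] = RN.one_seq m" .
  qed
  then show ?thesis
    unfolding poly_inverse_pair_def by (simp add: RN.one_seq_def ring_mat_simps)
qed

section \<open>Block matrices and the preprojective relations\<close>

lemma sum_atLeast1_atMost_eq_offs: "1 \<le> i \<Longrightarrow> sum d {1..i} = offs d i + d i"
  unfolding offs_def by (metis Suc_le_eq add.commute atLeastLessThanSuc_atLeastAtMost sum.atLeastLessThan_Suc)

lemma blk_bounds:
  assumes r: "r < sum d {1..m}"
  shows "1 \<le> blk d r" "blk d r \<le> m" "offs d (blk d r) \<le> r" "r < offs d (blk d r) + d (blk d r)"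
proof -
  let ?P = "\<lambda>i. r < sum d {1..i}"
  have P: "?P (blk d r)" unfolding blk_def using r by (rule LeastI)
  show "blk d r \<le> m" unfolding blk_def using r by (rule Least_le)
  show one: "1 \<le> blk d r"
    using P by (cases "blk d r") auto
  have "\<not> ?P (blk d r - 1)" unfolding blk_def
    by (rule not_less_Least) (use one in \<open>simp add: blk_def\<close>)
  moreover have "sum d {1..blk d r - 1} = offs d (blk d r)"
    unfolding offs_def using one by (intro sum.cong) auto
  ultimately show "offs d (blk d r) \<le> r" by simp
  show "r < offs d (blk d r) + d (blk d r)"
    using P sum_atLeast1_atMost_eq_offs[OF one] by simp
qed

lemma blk_offs_add: assumes "1 \<le> i" and "a < d i" shows "blk d (offs d i + a) = i"
  unfolding blk_def
proof (rule Least_equality)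
  show "offs d i + a < sum d {1..i}"
    using sum_atLeast1_atMost_eq_offs[OF \<open>1 \<le> i\<close>] \<open>a < d i\<close> by simp
next
  fix y assume "offs d i + a < sum d {1..y}"
  moreover have "y < i \<Longrightarrow> sum d {1..y} \<le> offs d i"
    unfolding offs_def by (rule sum_mono2) auto
  ultimately show "i \<le> y" by fastforce
qed

lemma sum_lessThan_sum_blocks: "(\<Sum>t<sum d {1..m}. g t) = (\<Sum>k\<in>{1..m}. \<Sum>a<d k. g (offs d k + a))"
proof (induction m)
  case (Suc m)
  have "offs d (Suc m) = sum d {1..m}"
    unfolding offs_def by (intro sum.cong) auto
  moreover have "(\<Sum>t<a + b. g t) = (\<Sum>t<a. g t) + (\<Sum>t<b. g (a + t))" for a b
    by (induction b) (auto simp: add.assoc)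
  ultimately show ?case
    using Suc by simp
qed simp

lemma block_mat_carrier [simp]: "block_mat m d1 d2 E \<in> carrier_mat (sum d1 {1..m}) (sum d2 {1..m})"
  by (simp add: block_mat_def)

lemma block_mat_mult:
  "block_mat m d1 d2 E * block_mat m d2 d3 F =
   block_mat m d1 d3 (\<lambda>i j a b. \<Sum>k\<in>{1..m}. \<Sum>c<d2 k. E i k a c * F k j c b)"
proof (rule eq_matI)
  fix r s assume "r < dim_row (block_mat m d1 d3 (\<lambda>i j a b. \<Sum>k\<in>{1..m}. \<Sum>c<d2 k. E i k a c * F k j c b))"
    and "s < dim_col (block_mat m d1 d3 (\<lambda>i j a b. \<Sum>k\<in>{1..m}. \<Sum>c<d2 k. E i k a c * F k j c b))"
  then have r: "r < sum d1 {1..m}" and s: "s < sum d3 {1..m}" by (auto simp: block_mat_def)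
  let ?i = "blk d1 r" and ?j = "blk d3 s"
  have "(block_mat m d1 d2 E * block_mat m d2 d3 F) $$ (r, s) =
     (\<Sum>t<sum d2 {1..m}. E ?i (blk d2 t) (r - offs d1 ?i) (t - offs d2 (blk d2 t)) *
        F (blk d2 t) ?j (t - offs d2 (blk d2 t)) (s - offs d3 ?j))"
    using r s by (simp add: block_mat_def scalar_prod_def atLeast0LessThan)
  also have "\<dots> = (\<Sum>k\<in>{1..m}. \<Sum>c<d2 k. E ?i k (r - offs d1 ?i) c * F k ?j c (s - offs d3 ?j))"
    unfolding sum_lessThan_sum_blocks by (intro sum.cong refl) (auto simp: blk_offs_add)
  finally show "(block_mat m d1 d2 E * block_mat m d2 d3 F) $$ (r, s) =
      block_mat m d1 d3 (\<lambda>i j a b. \<Sum>k\<in>{1..m}. \<Sum>c<d2 k. E i k a c * F k j c b) $$ (r, s)"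
    using r s by (simp add: block_mat_def)
qed (auto simp: block_mat_def)

lemma block_mat_cong:
  assumes "\<And>i j a b. 1 \<le> i \<Longrightarrow> i \<le> m \<Longrightarrow> 1 \<le> j \<Longrightarrow> j \<le> m \<Longrightarrow> a < d1 i \<Longrightarrow> b < d2 j
    \<Longrightarrow> E i j a b = F i j a b"
  shows "block_mat m d1 d2 E = block_mat m d1 d2 F"
proof (rule eq_matI)
  fix r s assume "r < dim_row (block_mat m d1 d2 F)" "s < dim_col (block_mat m d1 d2 F)"
  then have r: "r < sum d1 {1..m}" and s: "s < sum d2 {1..m}" by (auto simp: block_mat_def)
  show "block_mat m d1 d2 E $$ (r, s) = block_mat m d1 d2 F $$ (r, s)"
    using r s blk_bounds[OF r] blk_bounds[OF s] by (simp add: block_mat_def assms)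
qed (auto simp: block_mat_def)

lemma block_mat_add:
  "block_mat m d1 d2 E + block_mat m d1 d2 F = block_mat m d1 d2 (\<lambda>i j a b. E i j a b + F i j a b)"
  by (rule eq_matI) (auto simp: block_mat_def)

lemma block_mat_mult_single:
  assumes "\<And>i k a c. 1 \<le> k \<Longrightarrow> k \<le> m \<Longrightarrow> k \<noteq> \<kappa> i \<Longrightarrow> E i k a c = 0"
  shows "block_mat m d1 d2 E * block_mat m d2 d3 F = block_mat m d1 d3
    (\<lambda>i j a b. if 1 \<le> \<kappa> i \<and> \<kappa> i \<le> m then \<Sum>c<d2 (\<kappa> i). E i (\<kappa> i) a c * F (\<kappa> i) j c b else 0)"
  unfolding block_mat_mult
proof (rule block_mat_cong)
  fix i j a b
  show "(\<Sum>k\<in>{1..m}. \<Sum>c<d2 k. E i k a c * F k j c b) =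
    (if 1 \<le> \<kappa> i \<and> \<kappa> i \<le> m then \<Sum>c<d2 (\<kappa> i). E i (\<kappa> i) a c * F (\<kappa> i) j c b else 0)"
  proof (cases "1 \<le> \<kappa> i \<and> \<kappa> i \<le> m")
    case True
    then show ?thesis
      using assms by (subst sum.remove[of _ "\<kappa> i"]) (auto intro!: sum.neutral)
  qed (use assms in \<open>auto intro!: sum.neutral\<close>)
qed

lemma sum_index_mult_mat:
  assumes "X \<in> carrier_mat p q" "Y \<in> carrier_mat q r" "a < p" "b < r"
  shows "(\<Sum>c<q. X $$ (a, c) * ((e::complex) * Y $$ (c, b))) = e * (X * Y) $$ (a, b)"
  using assms by (simp add: scalar_prod_def sum_distrib_left atLeast0LessThan algebra_simps)

lemma Lambda_A_carrier_B:
  assumes "Lambda_A n dv dw B Gam Del" "1 \<le> i" "i \<le> 2*n-1" "1 \<le> j" "j \<le> 2*n-1" "i = j + 1 \<or> j = i + 1"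
  shows "B i j \<in> carrier_mat (dv i) (dv j)"
  using assms unfolding Lambda_A_def by blast

lemma Amat_mult_Bmat:
  assumes L: "Lambda_A n dv dw B Gam Del"
  shows "Amat n dv B * Bmat n dv B = block_mat (2*n-1) dv dv
     (\<lambda>i j a b. if i = j \<and> 2 \<le> i then eps n (i-1) * (B i (i-1) * B (i-1) i) $$ (a,b) else 0)"
  unfolding Amat_def Bmat_def
proof (rule trans[OF block_mat_mult_single[where \<kappa> = "\<lambda>i. i - 1"] block_mat_cong], goal_cases)
  case (2 i j a b)
  show ?case
  proof (cases "i = j \<and> 2 \<le> i")
    case True
    then have "j = i" "1 \<le> i - 1" "i - 1 \<le> 2*n-2" "i - 1 \<le> 2*n-1" "i - 1 + 1 = i"
      using 2 by auto
    then show ?thesis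
      using 2 sum_index_mult_mat[OF Lambda_A_carrier_B[OF L] Lambda_A_carrier_B[OF L], of i "i - 1" i a b]
      by simp
  qed (auto intro!: sum.neutral)
qed auto

lemma Bmat_mult_Amat:
  assumes L: "Lambda_A n dv dw B Gam Del"
  shows "Bmat n dv B * Amat n dv B = block_mat (2*n-1) dv dv
     (\<lambda>i j a b. if i = j \<and> i \<le> 2*n-2 then eps n i * (B i (i+1) * B (i+1) i) $$ (a,b) else 0)"
  unfolding Amat_def Bmat_def
proof (rule trans[OF block_mat_mult_single[where \<kappa> = "\<lambda>i. i + 1"] block_mat_cong], goal_cases)
  case (2 i j a b)
  show ?case
  proof (cases "i = j \<and> i \<le> 2*n-2")
    case True
    then have "j = i" "i + 1 \<le> 2*n-1"
      using 2 by auto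
    then show ?thesis
      using 2 sum_index_mult_mat[OF Lambda_A_carrier_B[OF L] Lambda_A_carrier_B[OF L], of i "i + 1" i a b]
      by (simp add: ac_simps)
  qed (auto intro!: sum.neutral)
qed auto

lemma Gmat_mult_Dmat:
  assumes L: "Lambda_A n dv dw B Gam Del"
  shows "Gmat n dv dw Gam * Dmat n dv dw Del = block_mat (2*n-1) dv dv
     (\<lambda>i j a b. if i = j then (Gam i * Del i) $$ (a,b) else 0)"
  unfolding Gmat_def Dmat_def
proof (rule trans[OF block_mat_mult_single[where \<kappa> = "\<lambda>i. i"] block_mat_cong], goal_cases)
  case (2 i j a b)
  have "Gam i \<in> carrier_mat (dv i) (dw i)" "Del i \<in> carrier_mat (dw i) (dv i)"
    using L 2 unfolding Lambda_A_def by auto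
  then show ?case
    using 2 sum_index_mult_mat[of "Gam i" _ _ "Del i" _ a b 1] by auto
qed auto

lemma Bz_mult_Bz:
  assumes L: "Lambda_A n dv dw B Gam Del" and i: "1 \<le> i" "i \<le> 2*n-1" and k: "k + 1 = i \<or> k = i + 1"
  shows "Bz n dv B i k * Bz n dv B k i
    = (if 1 \<le> k \<and> k \<le> 2*n-1 then B i k * B k i else 0\<^sub>m (dv i) (dv i))"
  using Lambda_A_carrier_B[OF L, of i k] Lambda_A_carrier_B[OF L, of k i] i k
  by (auto simp: Bz_def)

text \<open>The relation at vertex \<open>i\<close> is the \<open>(i, i)\<close> block of \<open>C + A B = B A\<close>; the three cases
  of the definition of \<open>Lambda_A\<close> differ only in the signs \<open>eps\<close>.\<close>

lemma Lambda_A_block_relation: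
  assumes L: "Lambda_A n dv dw B Gam Del" and i: "1 \<le> i" "i \<le> 2*n-1" and ab: "a < dv i" "b < dv i"
  shows "(Gam i * Del i) $$ (a,b) + (if 2 \<le> i then eps n (i-1) * (B i (i-1) * B (i-1) i) $$ (a,b) else 0)
    = (if i \<le> 2*n-2 then eps n i * (B i (i+1) * B (i+1) i) $$ (a,b) else 0)"
proof -
  let ?L = "Bz n dv B i (i-1) * Bz n dv B (i-1) i" and ?U = "Bz n dv B i (i+1) * Bz n dv B (i+1) i"
  have L_eq: "?L = (if 2 \<le> i then B i (i-1) * B (i-1) i else 0\<^sub>m (dv i) (dv i))"
    using Bz_mult_Bz[OF L i, of "i - 1"] i by auto
  have U_eq: "?U = (if i \<le> 2*n-2 then B i (i+1) * B (i+1) i else 0\<^sub>m (dv i) (dv i))"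
    using Bz_mult_Bz[OF L i, of "i + 1"] i by auto
  have BB: "B i k * B k i \<in> carrier_mat (dv i) (dv i)"
    if "1 \<le> k" "k \<le> 2*n-1" "k + 1 = i \<or> k = i + 1" for k
    by (rule mult_carrier_mat) (use Lambda_A_carrier_B[OF L] i that in auto)
  have LU: "?L \<in> carrier_mat (dv i) (dv i)" "?U \<in> carrier_mat (dv i) (dv i)"
    unfolding L_eq U_eq using BB i by auto
  have Le: "?L $$ (a,b) = (if 2 \<le> i then (B i (i-1) * B (i-1) i) $$ (a,b) else 0)"
    using ab unfolding L_eq by simp
  have Ue: "?U $$ (a,b) = (if i \<le> 2*n-2 then (B i (i+1) * B (i+1) i) $$ (a,b) else 0)"
    using ab unfolding U_eq by simp
  consider "i \<le> n - 1" | "i = n" | "n + 1 \<le> i"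
    by linarith
  then show ?thesis
  proof cases
    case 1
    then have "Gam i * Del i = ?U - ?L"
      using L i unfolding Lambda_A_def by auto
    then have "(Gam i * Del i) $$ (a,b) = ?U $$ (a,b) - ?L $$ (a,b)"
      using carrier_matD[OF LU(1)] carrier_matD[OF LU(2)] ab by simp
    then show ?thesis
      using 1 i Le Ue by (auto simp: eps_def)
  next
    case 2
    then have "Gam i * Del i = - ?L - ?U"
      using L unfolding Lambda_A_def by auto
    then have "(Gam i * Del i) $$ (a,b) = - ?L $$ (a,b) - ?U $$ (a,b)"
      using carrier_matD[OF LU(1)] carrier_matD[OF LU(2)] ab by simp
    then show ?thesis
      using 2 i Le Ue by (auto simp: eps_def)
  next
    case 3
    then have "Gam i * Del i = ?L - ?U"
      using L i unfolding Lambda_A_def by auto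
    then have "(Gam i * Del i) $$ (a,b) = ?L $$ (a,b) - ?U $$ (a,b)"
      using carrier_matD[OF LU(1)] carrier_matD[OF LU(2)] ab by simp
    then show ?thesis
      using 3 i Le Ue by (auto simp: eps_def)
  qed
qed

lemma Lambda_A_commutation:
  assumes L: "Lambda_A n dv dw B Gam Del"
  shows "Gmat n dv dw Gam * Dmat n dv dw Del + Amat n dv B * Bmat n dv B = Bmat n dv B * Amat n dv B"
  unfolding Gmat_mult_Dmat[OF L] Amat_mult_Bmat[OF L] Bmat_mult_Amat[OF L] block_mat_add
proof (rule block_mat_cong)
  fix i j a b assume "1 \<le> i" "i \<le> 2*n-1" "a < dv i"
  then show "(if i = j then (Gam i * Del i) $$ (a, b) else 0)
      + (if i = j \<and> 2 \<le> i then eps n (i-1) * (B i (i-1) * B (i-1) i) $$ (a, b) else 0)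
    = (if i = j \<and> i \<le> 2*n-2 then eps n i * (B i (i+1) * B (i+1) i) $$ (a, b) else 0)"
    if "b < dv j"
    using Lambda_A_block_relation[OF L, of i a b] that by (cases "i = j") auto
qed

theorem lemma4p10:
  fixes n :: nat and dv dw :: "nat \<Rightarrow> nat"
    and B :: "nat \<Rightarrow> nat \<Rightarrow> complex mat" and Gam Del :: "nat \<Rightarrow> complex mat"
  assumes "n \<ge> 1"
    and "Lambda_A n dv dw B Gam Del"
  shows "poly_inverse_pair (sum dw {1..2*n-1})
           (Xcoeff (sum dw {1..2*n-1}) (Amat n dv B) (Bmat n dv B) (Gmat n dv dw Gam) (Dmat n dv dw Del))
           (Ycoeff (sum dw {1..2*n-1}) (Amat n dv B) (Bmat n dv B) (Gmat n dv dw Gam) (Dmat n dv dw Del))"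
proof (rule poly_inverse_pair_Xcoeff_Ycoeff[where K = "sum dv {1..2*n-1}"])
  show "Gmat n dv dw Gam * Dmat n dv dw Del + Amat n dv B * Bmat n dv B = Bmat n dv B * Amat n dv B"
    using assms(2) by (rule Lambda_A_commutation)
qed (unfold Amat_def Bmat_def Gmat_def Dmat_def, (rule block_mat_carrier)+)

end
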